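(* For every integer $n\ge 2$, the subdivision scheme $S_n$ generates $C^1$ limit functions, i.e. for every bounded initial sequence $\mathbf f^0$ the limit function generated by $S_n$ from $\mathbf f^0$ is continuously differentiable.
   Context: For an integer $n\ge1$, the subdivision scheme $S_n$ acts on real sequences $\mathbf f^k=(f^k_i)_{i\in\mathbb Z}$ (the value $f^k_i$ being associated with the dyadic point $2^{-k}i$), starting from initial data $\mathbf f^0$, by the refinement rules $$f^{k+1}_{2i}=\frac1{2n-1}\sum_{j=-n+1}^{n-1}f^k_{i+j},\qquad f^{k+1}_{2i+1}=\frac1{2n}\sum_{j=-n+1}^{n}f^k_{i+j},\qquad i\in\mathbb Z,\ k\ge0.$$ The scheme is convergent: for every bounded $\mathbf f^0$ there is a continuous $F:\mathbb R\to\mathbb R$ (the limit function) with $\lim_{k\to\infty}\sup_{i}|f^k_i-F(2^{-k}i)|=0$. *)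

theory Defs
  imports "HOL-Analysis.Analysis"
begin

text \<open>One refinement step of the scheme S_n on a bi-infinite real sequence.
  For m = 2i we have m div 2 = i, for m = 2i+1 we have m div 2 = i.\<close>
definition Sn_step :: "nat \<Rightarrow> (int \<Rightarrow> real) \<Rightarrow> (int \<Rightarrow> real)" where
  "Sn_step n f = (\<lambda>m. if even m
      then (\<Sum>j\<in>{- int n + 1 .. int n - 1}. f (m div 2 + j)) / (2 * real n - 1)
      else (\<Sum>j\<in>{- int n + 1 .. int n}. f (m div 2 + j)) / (2 * real n))"

definition Sn_iter :: "nat \<Rightarrow> nat \<Rightarrow> (int \<Rightarrow> real) \<Rightarrow> (int \<Rightarrow> real)" where
  "Sn_iter n k f0 = (Sn_step n ^^ k) f0"

definition is_limit_function :: "nat \<Rightarrow> (int \<Rightarrow> real) \<Rightarrow> (real \<Rightarrow> real) \<Rightarrow> bool" where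
  "is_limit_function n f0 F \<longleftrightarrow> continuous_on UNIV F \<and>
     (\<forall>e>0. \<exists>K. \<forall>k\<ge>K. \<forall>i. \<bar>Sn_iter n k f0 i - F (real_of_int i / 2 ^ k)\<bar> < e)"

end

theory Submission
  imports Defs
begin

text \<open>The scaled differences \<open>D\<^sub>k i = 2^k (f^k (i + 1) - f^k i)\<close> are themselves
  generated by a subdivision scheme, each new value being a convex combination of \<open>2n - 1\<close>
  consecutive old values with weights at least \<open>2 / ((2n - 1) 2n)\<close>. The windows used for
  neighbouring values overlap, so this scheme shrinks the oscillation of \<open>D\<^sub>k\<close> over short
  ranges by a fixed factor \<open>\<theta> < 1\<close>; hence \<open>D\<^sub>k \<lfloor>2^k x\<rfloor>\<close> converges uniformly to a
  continuous \<open>G\<close>. Telescoping \<open>f^k\<close> between the dyadic points next to \<open>a\<close> and \<open>b\<close>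
  exhibits \<open>F b - F a\<close> as a limit of Riemann sums of \<open>D\<^sub>k\<close>, whence \<open>F' = G\<close>.\<close>

lemma abel_sum_ascending:
  "real N * h N - (\<Sum>t<N. h t) = (\<Sum>t<N. (real t + 1) * (h (Suc t) - h t))"
  by (induction N) (auto simp: algebra_simps)

lemma abel_sum_descending:
  "(\<Sum>t<N. h (Suc t)) - real N * h 0 = (\<Sum>t<N. (real N - real t) * (h (Suc t) - h t))"
proof (induction N)
  case (Suc N)
  have "(\<Sum>t<Suc N. (real (Suc N) - real t) * (h (Suc t) - h t))
      = (\<Sum>t<Suc N. (real N - real t) * (h (Suc t) - h t)) + (\<Sum>t<Suc N. h (Suc t) - h t)"
    by (simp add: sum.distrib[symmetric] algebra_simps)
  then show ?case using Suc.IH by (simp add: sum_lessThan_telescope algebra_simps)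
qed simp

lemma mean_Suc_minus_mean:
  assumes "N \<ge> 1"
  shows "(\<Sum>t<Suc N. h t) / (real N + 1) - (\<Sum>t<N. h t) / real N
       = (\<Sum>t<N. (real t + 1) * (h (Suc t) - h t)) / (real N * (real N + 1))"
  unfolding abel_sum_ascending[symmetric] using assms by (simp add: field_simps)

lemma shifted_mean_minus_mean_Suc:
  assumes "N \<ge> 1"
  shows "(\<Sum>t<N. h (Suc t)) / real N - (\<Sum>t<Suc N. h t) / (real N + 1)
       = (\<Sum>t<N. (real N - real t) * (h (Suc t) - h t)) / (real N * (real N + 1))"
  unfolding abel_sum_descending[symmetric] sum.lessThan_Suc_shift using assms
  by (simp add: field_simps)

lemma sum_atLeastAtMost_int_eq_lessThan:
  fixes g :: "int \<Rightarrow> 'a::comm_monoid_add"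
  shows "(\<Sum>j\<in>{a..b}. g j) = (\<Sum>t<nat (b - a + 1). g (a + int t))"
proof -
  have "{a..b} = (\<lambda>t. a + int t) ` {..<nat (b - a + 1)}"
  proof (intro subset_antisym subsetI)
    fix j assume "j \<in> {a..b}"
    then have "j = a + int (nat (j - a))" "nat (j - a) < nat (b - a + 1)" by auto
    then show "j \<in> (\<lambda>t. a + int t) ` {..<nat (b - a + 1)}" by blast
  qed auto
  moreover have "inj_on (\<lambda>t. a + int t) {..<nat (b - a + 1)}" by (auto simp: inj_on_def)
  ultimately show ?thesis by (simp add: sum.reindex)
qed

lemma Sn_step_as_window_mean:
  assumes "n \<ge> 1"
  shows "Sn_step n f m = (if even m
      then (\<Sum>t<2*n-1. f (m div 2 - int n + 1 + int t)) / real (2*n-1)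
      else (\<Sum>t<2*n. f (m div 2 - int n + 1 + int t)) / real (2*n))"
proof -
  have "nat (int n - 1 - (- int n + 1) + 1) = 2*n-1" "nat (int n - (- int n + 1) + 1) = 2*n"
    using assms by auto
  moreover have "real (2*n-1) = 2 * real n - 1" using assms by (simp add: of_nat_diff)
  ultimately show ?thesis
    unfolding Sn_step_def sum_atLeastAtMost_int_eq_lessThan by (simp add: algebra_simps)
qed

definition diff_weight :: "nat \<Rightarrow> int \<Rightarrow> nat \<Rightarrow> real" where
  "diff_weight N m t = 2 * (if even m then real t + 1 else real N - real t) / (real N * (real N + 1))"

lemma Sn_step_diff:
  assumes n: "n \<ge> 1"
  shows "2 * (Sn_step n f (m + 1) - Sn_step n f m) = (\<Sum>t<2*n-1. diff_weight (2*n-1) m t *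
      (f (m div 2 - int n + 1 + int t + 1) - f (m div 2 - int n + 1 + int t)))"
proof -
  define N where "N = 2*n - 1"
  define h where "h t = f (m div 2 - int n + 1 + int t)" for t
  have N: "N \<ge> 1" "2*n = Suc N" "real (Suc N) = real N + 1" using n by (auto simp: N_def)
  have "Sn_step n f (m + 1) - Sn_step n f m
      = (\<Sum>t<N. (if even m then real t + 1 else real N - real t) * (h (Suc t) - h t))
        / (real N * (real N + 1))"
  proof (cases "even m")
    case True
    then have "(m + 1) div 2 = m div 2" by auto
    with True have "Sn_step n f (m + 1) = (\<Sum>t<Suc N. h t) / (real N + 1)"
      "Sn_step n f m = (\<Sum>t<N. h t) / real N"
      unfolding Sn_step_as_window_mean[OF n] N_def[symmetric] N(2) h_def
      by (simp_all add: N(3))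
    with True show ?thesis by (simp only: mean_Suc_minus_mean[OF N(1)] if_True)
  next
    case False
    then have "(m + 1) div 2 = m div 2 + 1" by (auto elim!: oddE)
    with False have "Sn_step n f (m + 1) = (\<Sum>t<N. h (Suc t)) / real N"
      "Sn_step n f m = (\<Sum>t<Suc N. h t) / (real N + 1)"
      unfolding Sn_step_as_window_mean[OF n] N_def[symmetric] N(2) h_def
      by (simp_all add: N(3) algebra_simps)
    with False show ?thesis by (simp only: shifted_mean_minus_mean_Suc[OF N(1)] if_False)
  qed
  also have "\<dots> = (\<Sum>t<N. diff_weight N m t * (h (Suc t) - h t)) / 2"
    unfolding diff_weight_def sum_divide_distrib by (intro sum.cong) auto
  finally show ?thesis
    unfolding N_def[symmetric] by (simp add: h_def add_ac)
qed

lemma sum_diff_weight: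
  assumes "N \<ge> 1"
  shows "(\<Sum>t<N. diff_weight N m t) = 1"
proof -
  have "(\<Sum>t<N. real t + 1) = real N * (real N + 1) / 2"
    by (induction N) (auto simp: field_simps)
  moreover have "(\<Sum>t<N. real N - real t) = (\<Sum>t<N. real t + 1)"
    by (rule sum.reindex_bij_witness[of _ "\<lambda>t. N - 1 - t" "\<lambda>t. N - 1 - t"]) (auto simp: of_nat_diff)
  moreover have "(\<Sum>t<N. diff_weight N m t)
      = 2 * (\<Sum>t<N. if even m then real t + 1 else real N - real t) / (real N * (real N + 1))"
    unfolding diff_weight_def by (simp add: sum_divide_distrib sum_distrib_left)
  ultimately show ?thesis
    using assms by (cases "even m") simp_all
qed

lemma diff_weight_ge:
  assumes "t < N"
  shows "diff_weight N m t \<ge> 2 / (real N * (real N + 1))"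
  using assms unfolding diff_weight_def by (simp add: divide_right_mono)

lemma overlapping_means_diff_le:
  fixes x :: "int \<Rightarrow> real" and w1 w2 :: "nat \<Rightarrow> real"
  assumes w1: "\<And>t. t < N \<Longrightarrow> w1 t \<ge> e" and w2: "\<And>t. t < N \<Longrightarrow> w2 t \<ge> e"
    and s1: "(\<Sum>t<N. w1 t) = 1" and s2: "(\<Sum>t<N. w2 t) = 1" and e: "e \<ge> 0"
    and overlap: "\<bar>c1 - c2\<bar> \<le> int N - 1"
    and osc: "\<And>t s. t < N \<Longrightarrow> s < N \<Longrightarrow> \<bar>x (c1 + int t) - x (c2 + int s)\<bar> \<le> \<delta>"
  shows "\<bar>(\<Sum>t<N. w1 t * x (c1 + int t)) - (\<Sum>s<N. w2 s * x (c2 + int s))\<bar> \<le> (1 - e\<^sup>2) * \<delta>"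
proof -
  obtain t0 s0 where ts: "t0 < N" "s0 < N" "c1 + int t0 = c2 + int s0"
    using overlap
    by (cases "c1 \<le> c2") (auto intro: that[of "nat (c2 - c1)" 0] that[of 0 "nat (c1 - c2)"])
  have "\<delta> \<ge> 0" using osc[OF ts(1,2)] ts(3) by simp
  define P where "P = {..<N} \<times> {..<N}"
  define W where "W = (\<lambda>(t, s). w1 t * w2 s)"
  define d where "d = (\<lambda>(t, s). x (c1 + int t) - x (c2 + int s))"
  have p0: "(t0, s0) \<in> P" "d (t0, s0) = 0" using ts by (auto simp: P_def d_def)
  have W_nonneg: "W p \<ge> 0" if "p \<in> P" for p
    using that w1 w2 e by (force simp: P_def W_def intro: mult_nonneg_nonneg)
  have sum_W: "(\<Sum>p\<in>P. W p) = 1"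
    by (simp add: P_def W_def sum.cartesian_product[symmetric] sum_distrib_left[symmetric] s1 s2)
  have "(\<Sum>t<N. w1 t * x (c1 + int t)) - (\<Sum>s<N. w2 s * x (c2 + int s))
      = (\<Sum>t<N. \<Sum>s<N. w1 t * w2 s * (x (c1 + int t) - x (c2 + int s)))"
    by (simp add: algebra_simps sum_subtractf sum_distrib_left[symmetric]
        sum_distrib_right[symmetric] s1 s2)
  also have "\<dots> = (\<Sum>p\<in>P. W p * d p)"
    by (simp add: P_def W_def d_def sum.cartesian_product split_def)
  also have "\<dots> = (\<Sum>p\<in>P - {(t0, s0)}. W p * d p)"
    using p0 sum.remove[of P "(t0, s0)" "\<lambda>p. W p * d p"] by (simp add: P_def)
  also have "\<bar>\<dots>\<bar> \<le> (\<Sum>p\<in>P - {(t0, s0)}. W p * \<delta>)"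
  proof (rule order_trans[OF sum_abs], intro sum_mono)
    fix p assume "p \<in> P - {(t0, s0)}"
    moreover obtain t s where "p = (t, s)" by fastforce
    ultimately show "\<bar>W p * d p\<bar> \<le> W p * \<delta>"
      using W_nonneg[of p] osc[of t s] by (auto simp: P_def d_def abs_mult intro: mult_left_mono)
  qed
  also have "\<dots> = (1 - W (t0, s0)) * \<delta>"
    using p0 by (simp add: P_def sum_diff1 sum_distrib_right[symmetric] sum_W[unfolded P_def])
  also have "\<dots> \<le> (1 - e\<^sup>2) * \<delta>"
  proof -
    have "e\<^sup>2 \<le> W (t0, s0)" using w1[OF ts(1)] w2[OF ts(2)] e
      by (simp add: W_def power2_eq_square mult_mono)
    with \<open>\<delta> \<ge> 0\<close> show ?thesis by (simp add: mult_right_mono)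
  qed
  finally show ?thesis .
qed

lemma convergent_geometric_increments:
  fixes a :: "nat \<Rightarrow> real"
  assumes d: "\<And>k. \<bar>a (Suc k) - a k\<bar> \<le> C * q ^ k" and q: "0 \<le> q" "q < 1"
  shows "\<exists>L. a \<longlonglongrightarrow> L \<and> (\<forall>k. \<bar>L - a k\<bar> \<le> C * q ^ k / (1 - q))"
proof -
  define b where "b i = a (Suc i) - a i" for i
  have "summable (\<lambda>i. C * q ^ i)" using q by (intro summable_mult summable_geometric) simp
  then have sb: "summable (\<lambda>i. norm (b i))"
    by (rule summable_comparison_test[rotated]) (use d in \<open>simp add: b_def\<close>)
  then have "summable b" by (rule summable_norm_cancel)
  have a_eq: "a k = a 0 + (\<Sum>i<k. b i)" for k
    unfolding b_def sum_lessThan_telescope by simp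
  have "(\<lambda>k. a 0 + (\<Sum>i<k. b i)) \<longlonglongrightarrow> a 0 + suminf b"
    by (intro tendsto_add tendsto_const summable_LIMSEQ \<open>summable b\<close>)
  then have "a \<longlonglongrightarrow> a 0 + suminf b" by (simp flip: a_eq)
  moreover have "\<bar>(a 0 + suminf b) - a k\<bar> \<le> C * q ^ k / (1 - q)" for k
  proof -
    have sbk: "summable (\<lambda>i. norm (b (i + k)))" using summable_ignore_initial_segment[OF sb] .
    have "\<bar>(a 0 + suminf b) - a k\<bar> = \<bar>\<Sum>i. b (i + k)\<bar>"
      unfolding a_eq[of k] suminf_minus_initial_segment[OF \<open>summable b\<close>] by simp
    also have "\<dots> \<le> (\<Sum>i. norm (b (i + k)))"
      using summable_norm[OF sbk] by simp
    also have "\<dots> \<le> (\<Sum>i. C * q ^ k * q ^ i)"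
      using q d[of "_ + k"] sbk
      by (intro suminf_le summable_mult summable_geometric) (simp_all add: b_def power_add mult_ac)
    also have "\<dots> = C * q ^ k / (1 - q)"
      using q by (simp add: suminf_mult suminf_geometric)
    finally show ?thesis .
  qed
  ultimately show ?thesis by blast
qed

lemma floor_double_div_2: "\<lfloor>2 * x\<rfloor> div 2 = \<lfloor>x :: real\<rfloor>"
  using floor_divide_real_eq_div[of 2 "2 * x"] by simp

lemma sum_int_telescope:
  fixes f :: "int \<Rightarrow> 'a::ab_group_add"
  assumes "p \<le> q"
  shows "(\<Sum>l\<in>{p..<q}. f (l + 1) - f l) = f q - f p"
  using assms
proof (induction q rule: int_ge_induct)
  case (step q)
  have "{p..<q + 1} = insert q {p..<q}" using step.hyps by auto
  with step show ?case by (simp add: add.commute)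
qed simp

lemma dyadic_floor_tendsto: "(\<lambda>k. real_of_int \<lfloor>2 ^ k * x\<rfloor> / 2 ^ k) \<longlonglongrightarrow> (x :: real)"
proof (rule real_tendsto_sandwich)
  have "x - 1 / 2 ^ k \<le> real_of_int \<lfloor>2 ^ k * x\<rfloor> / 2 ^ k" for k :: nat
  proof -
    have "2 ^ k * x - 1 \<le> real_of_int \<lfloor>2 ^ k * x\<rfloor>" by linarith
    then have "(2 ^ k * x - 1) / 2 ^ k \<le> real_of_int \<lfloor>2 ^ k * x\<rfloor> / 2 ^ k"
      by (simp add: divide_right_mono)
    then show ?thesis by (simp add: diff_divide_distrib)
  qed
  then show "\<forall>\<^sub>F k in sequentially. x - 1 / 2 ^ k \<le> real_of_int \<lfloor>2 ^ k * x\<rfloor> / 2 ^ k"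
    by simp
  have "real_of_int \<lfloor>2 ^ k * x\<rfloor> / 2 ^ k \<le> x" for k :: nat
    by (simp add: divide_le_eq mult.commute)
  then show "\<forall>\<^sub>F k in sequentially. real_of_int \<lfloor>2 ^ k * x\<rfloor> / 2 ^ k \<le> x"
    by simp
  show "(\<lambda>k. x - 1 / 2 ^ k) \<longlonglongrightarrow> x"
    using tendsto_diff[OF tendsto_const LIMSEQ_divide_realpow_zero[of 2 1], of x] by simp
qed simp

lemma abs_floor_diff_le_1:
  fixes u v :: real
  assumes "\<bar>u - v\<bar> < 1"
  shows "\<bar>\<lfloor>u\<rfloor> - \<lfloor>v\<rfloor>\<bar> \<le> 1"
proof -
  have "real_of_int (\<lfloor>u\<rfloor> - \<lfloor>v\<rfloor>) < 2" "real_of_int (\<lfloor>u\<rfloor> - \<lfloor>v\<rfloor>) > -2"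
    using assms unfolding abs_less_iff of_int_diff by linarith+
  then show ?thesis by linarith
qed

definition divided_diff :: "nat \<Rightarrow> (int \<Rightarrow> real) \<Rightarrow> nat \<Rightarrow> int \<Rightarrow> real" where
  "divided_diff n f0 k i = 2 ^ k * (Sn_iter n k f0 (i + 1) - Sn_iter n k f0 i)"

lemma divided_diff_Suc:
  assumes "n \<ge> 1"
  shows "divided_diff n f0 (Suc k) m
    = (\<Sum>t<2*n-1. diff_weight (2*n-1) m t * divided_diff n f0 k (m div 2 - int n + 1 + int t))"
proof -
  have "divided_diff n f0 (Suc k) m
      = 2 ^ k * (2 * (Sn_step n (Sn_iter n k f0) (m + 1) - Sn_step n (Sn_iter n k f0) m))"
    by (simp add: divided_diff_def Sn_iter_def)
  then show ?thesis
    unfolding Sn_step_diff[OF assms] divided_diff_def sum_distrib_left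
    by (simp add: mult.left_commute)
qed

definition contraction_factor :: "nat \<Rightarrow> real" where
  "contraction_factor N = 1 - (2 / (real N * (real N + 1)))\<^sup>2"

lemma contraction_factor_bounds:
  assumes "N \<ge> 1"
  shows "0 \<le> contraction_factor N" "contraction_factor N < 1"
proof -
  have "real N * (real N + 1) \<ge> 1 * 2" using assms by (intro mult_mono) auto
  then have "0 < 2 / (real N * (real N + 1))" "2 / (real N * (real N + 1)) \<le> 1"
    by simp_all
  then show "0 \<le> contraction_factor N" "contraction_factor N < 1"
    unfolding contraction_factor_def using assms by (auto simp: power_le_one)
qed

definition derivative_limit :: "nat \<Rightarrow> (int \<Rightarrow> real) \<Rightarrow> real \<Rightarrow> real" where
  "derivative_limit n f0 x = lim (\<lambda>k. divided_diff n f0 k \<lfloor>2 ^ k * x\<rfloor>)"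

context
  fixes n :: nat and f0 :: "int \<Rightarrow> real" and B :: real
  assumes n2: "n \<ge> 2" and f0_bounded: "\<And>i. \<bar>f0 i\<bar> \<le> B"
begin

lemma n_ge_1: "n \<ge> 1"
  using n2 by simp

abbreviation \<theta> :: real where "\<theta> \<equiv> contraction_factor (2 * n - 1)"

lemma \<theta>_bounds: "0 \<le> \<theta>" "\<theta> < 1"
  using contraction_factor_bounds[of "2 * n - 1"] n2 by auto

text \<open>Indices at distance at most \<open>4n - 4\<close> have parents at distance at most \<open>2n - 2\<close>,
  whose windows of length \<open>2n - 1\<close> overlap and together again span at most \<open>4n - 4\<close>.\<close>

lemma divided_diff_oscillation:
  assumes "\<bar>p - q\<bar> \<le> 4 * int n - 4"
  shows "\<bar>divided_diff n f0 k p - divided_diff n f0 k q\<bar> \<le> 4 * B * \<theta> ^ k"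
  using assms
proof (induction k arbitrary: p q)
  case 0
  show ?case
    using f0_bounded[of "p + 1"] f0_bounded[of p] f0_bounded[of "q + 1"] f0_bounded[of q]
    by (simp add: divided_diff_def Sn_iter_def abs_le_iff)
next
  case (Suc k)
  define N where "N = 2 * n - 1"
  have N: "N \<ge> 1" "int N = 2 * int n - 1" using n2 by (auto simp: N_def)
  define c1 where "c1 = p div 2 - int n + 1"
  define c2 where "c2 = q div 2 - int n + 1"
  have "\<bar>c1 - c2\<bar> \<le> 2 * int n - 2" using Suc.prems unfolding c1_def c2_def by linarith
  have "\<bar>(\<Sum>t<N. diff_weight N p t * divided_diff n f0 k (c1 + int t))
        - (\<Sum>s<N. diff_weight N q s * divided_diff n f0 k (c2 + int s))\<bar>
      \<le> (1 - (2 / (real N * (real N + 1)))\<^sup>2) * (4 * B * \<theta> ^ k)"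
  proof (rule overlapping_means_diff_le)
    fix t s assume "t < N" "s < N"
    with \<open>\<bar>c1 - c2\<bar> \<le> 2 * int n - 2\<close> N(2) have "\<bar>c1 + int t - (c2 + int s)\<bar> \<le> 4 * int n - 4"
      by linarith
    then show "\<bar>divided_diff n f0 k (c1 + int t) - divided_diff n f0 k (c2 + int s)\<bar> \<le> 4 * B * \<theta> ^ k"
      by (rule Suc.IH)
  qed (use \<open>\<bar>c1 - c2\<bar> \<le> 2 * int n - 2\<close> N in \<open>auto simp: sum_diff_weight diff_weight_ge\<close>)
  then show ?case
    unfolding divided_diff_Suc[OF n_ge_1] N_def[symmetric] c1_def[symmetric] c2_def[symmetric]
    by (simp add: contraction_factor_def mult_ac)
qed

lemma divided_diff_Suc_close:
  "\<bar>divided_diff n f0 (Suc k) m - divided_diff n f0 k (m div 2)\<bar> \<le> 4 * B * \<theta> ^ k"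
proof -
  define N where "N = 2 * n - 1"
  define c where "c = m div 2 - int n + 1"
  have N: "N \<ge> 1" "int N = 2 * int n - 1" using n2 by (auto simp: N_def)
  have "divided_diff n f0 (Suc k) m - divided_diff n f0 k (m div 2)
      = (\<Sum>t<N. diff_weight N m t * (divided_diff n f0 k (c + int t) - divided_diff n f0 k (m div 2)))"
    unfolding divided_diff_Suc[OF n_ge_1] c_def N_def[symmetric]
    by (simp add: algebra_simps sum_subtractf sum_distrib_right[symmetric] sum_diff_weight[OF N(1)])
  also have "\<bar>\<dots>\<bar> \<le> (\<Sum>t<N. diff_weight N m t * (4 * B * \<theta> ^ k))"
  proof (rule order_trans[OF sum_abs], intro sum_mono)
    fix t assume "t \<in> {..<N}"
    then have w: "diff_weight N m t \<ge> 0" and osc: "\<bar>c + int t - m div 2\<bar> \<le> 4 * int n - 4"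
      using N n2 by (auto simp: c_def intro: order_trans[OF _ diff_weight_ge])
    show "\<bar>diff_weight N m t * (divided_diff n f0 k (c + int t) - divided_diff n f0 k (m div 2))\<bar>
        \<le> diff_weight N m t * (4 * B * \<theta> ^ k)"
      unfolding abs_mult abs_of_nonneg[OF w]
      by (rule mult_left_mono[OF divided_diff_oscillation[OF osc] w])
  qed
  also have "\<dots> = 4 * B * \<theta> ^ k"
    by (simp add: sum_distrib_right[symmetric] sum_diff_weight[OF N(1)])
  finally show ?thesis .
qed

lemma derivative_limit_approx:
  "\<bar>derivative_limit n f0 x - divided_diff n f0 k \<lfloor>2 ^ k * x\<rfloor>\<bar> \<le> 4 * B * \<theta> ^ k / (1 - \<theta>)"
proof -
  have increments: "\<bar>divided_diff n f0 (Suc k) \<lfloor>2 ^ Suc k * x\<rfloor> - divided_diff n f0 k \<lfloor>2 ^ k * x\<rfloor>\<bar>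
      \<le> 4 * B * \<theta> ^ k" for k
    using divided_diff_Suc_close[of k "\<lfloor>2 ^ Suc k * x\<rfloor>"] floor_double_div_2[of "2 ^ k * x"]
    by (simp add: mult.assoc)
  obtain L where L: "(\<lambda>k. divided_diff n f0 k \<lfloor>2 ^ k * x\<rfloor>) \<longlonglongrightarrow> L"
      "\<And>k. \<bar>L - divided_diff n f0 k \<lfloor>2 ^ k * x\<rfloor>\<bar> \<le> 4 * B * \<theta> ^ k / (1 - \<theta>)"
    using convergent_geometric_increments[OF increments \<theta>_bounds] by blast
  moreover have "derivative_limit n f0 x = L"
    unfolding derivative_limit_def using L(1) by (rule limI)
  ultimately show ?thesis by simp
qed

lemma approx_error_tendsto_0:
  "(\<lambda>k. 4 * B * \<theta> ^ k / (1 - \<theta>)) \<longlonglongrightarrow> 0"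
  using \<theta>_bounds by (auto intro!: tendsto_eq_intros LIMSEQ_power_zero)

lemma continuous_derivative_limit: "continuous_on UNIV (derivative_limit n f0)"
  unfolding continuous_on_iff
proof (intro ballI allI impI)
  fix x :: real and \<epsilon> :: real assume "\<epsilon> > 0"
  have "(\<lambda>k. 2 * (4 * B * \<theta> ^ k / (1 - \<theta>)) + 4 * B * \<theta> ^ k) \<longlonglongrightarrow> 2 * 0 + 4 * B * 0"
    using \<theta>_bounds by (intro tendsto_intros approx_error_tendsto_0 LIMSEQ_power_zero) auto
  then have "\<forall>\<^sub>F k in sequentially. 2 * (4 * B * \<theta> ^ k / (1 - \<theta>)) + 4 * B * \<theta> ^ k < \<epsilon>"
    using \<open>\<epsilon> > 0\<close> by (intro order_tendstoD(2)) auto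
  then obtain k where k: "2 * (4 * B * \<theta> ^ k / (1 - \<theta>)) + 4 * B * \<theta> ^ k < \<epsilon>"
    by (meson eventually_sequentially order.refl)
  show "\<exists>\<delta>>0. \<forall>y\<in>UNIV. dist y x < \<delta> \<longrightarrow> dist (derivative_limit n f0 y) (derivative_limit n f0 x) < \<epsilon>"
  proof (intro exI conjI ballI impI)
    show "(1 / 2 ^ k :: real) > 0" by simp
    fix y :: real assume "dist y x < 1 / 2 ^ k"
    moreover have "\<bar>2 ^ k * y - 2 ^ k * x\<bar> = \<bar>y - x\<bar> * 2 ^ k"
      by (simp add: abs_mult flip: right_diff_distrib)
    ultimately have "\<bar>2 ^ k * y - 2 ^ k * x\<bar> < 1"
      by (simp add: dist_real_def field_simps)
    then have "\<bar>\<lfloor>2 ^ k * y\<rfloor> - \<lfloor>2 ^ k * x\<rfloor>\<bar> \<le> 1"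
      by (rule abs_floor_diff_le_1)
    then have "\<bar>\<lfloor>2 ^ k * y\<rfloor> - \<lfloor>2 ^ k * x\<rfloor>\<bar> \<le> 4 * int n - 4"
      using n2 by linarith
    then have "\<bar>divided_diff n f0 k \<lfloor>2 ^ k * y\<rfloor> - divided_diff n f0 k \<lfloor>2 ^ k * x\<rfloor>\<bar> \<le> 4 * B * \<theta> ^ k"
      by (rule divided_diff_oscillation)
    then show "dist (derivative_limit n f0 y) (derivative_limit n f0 x) < \<epsilon>"
      using derivative_limit_approx[of y k] derivative_limit_approx[of x k] k
      unfolding dist_real_def by linarith
  qed
qed

lemma Sn_iter_dyadic_floor_tendsto:
  assumes "is_limit_function n f0 F"
  shows "(\<lambda>k. Sn_iter n k f0 \<lfloor>2 ^ k * x\<rfloor>) \<longlonglongrightarrow> F x"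
proof -
  have grid: "(\<lambda>k. Sn_iter n k f0 (r k) - F (real_of_int (r k) / 2 ^ k)) \<longlonglongrightarrow> 0" for r
  proof (rule LIMSEQ_I)
    fix e :: real assume "e > 0"
    then show "\<exists>K. \<forall>k\<ge>K. norm (Sn_iter n k f0 (r k) - F (real_of_int (r k) / 2 ^ k) - 0) < e"
      using assms unfolding is_limit_function_def by fastforce
  qed
  have "isCont F x"
    using assms unfolding is_limit_function_def by (simp add: continuous_on_eq_continuous_at)
  then have "(\<lambda>k. (Sn_iter n k f0 \<lfloor>2 ^ k * x\<rfloor> - F (real_of_int \<lfloor>2 ^ k * x\<rfloor> / 2 ^ k))
      + F (real_of_int \<lfloor>2 ^ k * x\<rfloor> / 2 ^ k)) \<longlonglongrightarrow> 0 + F x"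
    by (intro tendsto_add grid isCont_tendsto_compose[of x F] dyadic_floor_tendsto)
  then show ?thesis by simp
qed

lemma divided_diff_near_slope:
  assumes near: "\<And>t. a - \<eta> < t \<Longrightarrow> t \<le> b \<Longrightarrow> \<bar>derivative_limit n f0 t - g\<bar> \<le> e"
    and k: "1 / 2 ^ k < \<eta>" and l: "\<lfloor>2 ^ k * a\<rfloor> \<le> l" "l < \<lfloor>2 ^ k * b\<rfloor>"
  shows "\<bar>divided_diff n f0 k l - g\<bar> \<le> 4 * B * \<theta> ^ k / (1 - \<theta>) + e"
proof -
  define t where "t = real_of_int l / 2 ^ k"
  have "2 ^ k * (a - 1 / 2 ^ k) < real_of_int l" "real_of_int l < 2 ^ k * b"
    using l by (auto simp: algebra_simps) linarith+
  then have "a - 1 / 2 ^ k < t" "t < b"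
    unfolding t_def by (auto simp: field_simps)
  then have "\<bar>derivative_limit n f0 t - g\<bar> \<le> e"
    using k by (intro near) auto
  moreover have "\<bar>derivative_limit n f0 t - divided_diff n f0 k l\<bar> \<le> 4 * B * \<theta> ^ k / (1 - \<theta>)"
    using derivative_limit_approx[of t k] by (simp add: t_def)
  ultimately show ?thesis by linarith
qed

text \<open>The slack \<open>\<eta>\<close> accommodates the grid point \<open>\<lfloor>2^k a\<rfloor> / 2^k\<close>, which lies left of \<open>a\<close>.\<close>

lemma limit_function_increment_estimate:
  assumes lf: "is_limit_function n f0 F" and "a \<le> b" and "\<eta> > 0"
    and near: "\<And>t. a - \<eta> < t \<Longrightarrow> t \<le> b \<Longrightarrow> \<bar>derivative_limit n f0 t - g\<bar> \<le> e"
  shows "\<bar>F b - F a - g * (b - a)\<bar> \<le> e * (b - a)"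
proof -
  define p where "p k = \<lfloor>2 ^ k * a\<rfloor>" for k :: nat
  define q where "q k = \<lfloor>2 ^ k * b\<rfloor>" for k :: nat
  define X where "X k = Sn_iter n k f0 (q k) - Sn_iter n k f0 (p k)" for k
  define Y where "Y k = real_of_int (q k - p k) / 2 ^ k" for k :: nat
  define err where "err k = 4 * B * \<theta> ^ k / (1 - \<theta>)" for k :: nat
  have pq: "p k \<le> q k" for k
    unfolding p_def q_def using \<open>a \<le> b\<close> by (intro floor_mono mult_left_mono) auto
  have X_minus_gY: "X k - g * Y k = (\<Sum>l\<in>{p k..<q k}. divided_diff n f0 k l - g) / 2 ^ k" for k
  proof -
    have "X k = (\<Sum>l\<in>{p k..<q k}. divided_diff n f0 k l) / 2 ^ k"
      unfolding X_def sum_int_telescope[OF pq, symmetric] divided_diff_def sum_divide_distrib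
      by simp
    then show ?thesis
      using pq[of k] by (simp add: Y_def sum_subtractf field_simps)
  qed
  have "\<forall>\<^sub>F k in sequentially. 1 / 2 ^ k < \<eta>"
    using LIMSEQ_divide_realpow_zero[of 2 1] \<open>\<eta> > 0\<close> by (intro order_tendstoD(2)) auto
  then have bound: "\<forall>\<^sub>F k in sequentially. \<bar>X k - g * Y k\<bar> \<le> Y k * (err k + e)"
  proof (rule eventually_mono)
    fix k :: nat assume k: "1 / 2 ^ k < \<eta>"
    have "\<bar>\<Sum>l\<in>{p k..<q k}. divided_diff n f0 k l - g\<bar> \<le> (\<Sum>l\<in>{p k..<q k}. err k + e)"
      using divided_diff_near_slope[OF near k] unfolding p_def q_def err_def
      by (intro order_trans[OF sum_abs] sum_mono) auto
    then show "\<bar>X k - g * Y k\<bar> \<le> Y k * (err k + e)"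
      unfolding X_minus_gY using pq[of k] by (simp add: Y_def abs_divide divide_right_mono)
  qed
  have X: "X \<longlonglongrightarrow> F b - F a"
    unfolding X_def p_def q_def by (intro tendsto_diff Sn_iter_dyadic_floor_tendsto[OF lf])
  have Y: "Y \<longlonglongrightarrow> b - a"
    using tendsto_diff[OF dyadic_floor_tendsto[of b] dyadic_floor_tendsto[of a]]
    unfolding Y_def[abs_def] p_def q_def by (simp add: diff_divide_distrib)
  have err: "err \<longlonglongrightarrow> 0"
    unfolding err_def[abs_def] by (rule approx_error_tendsto_0)
  have "\<bar>F b - F a - g * (b - a)\<bar> \<le> (b - a) * (0 + e)"
    by (rule tendsto_le[OF sequentially_bot _ _ bound]; intro tendsto_intros X Y err)
  then show ?thesis by (simp add: mult.commute)
qed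

lemma limit_function_linear_approx:
  assumes lf: "is_limit_function n f0 F" and "\<delta> > 0" and "\<bar>h\<bar> < \<delta> / 2"
    and near: "\<And>t. \<bar>t - x\<bar> < \<delta> \<Longrightarrow> \<bar>derivative_limit n f0 t - derivative_limit n f0 x\<bar> \<le> e"
  shows "\<bar>F (x + h) - F x - derivative_limit n f0 x * h\<bar> \<le> e * \<bar>h\<bar>"
proof (cases "h \<ge> 0")
  case True
  have "\<bar>F (x + h) - F x - derivative_limit n f0 x * (x + h - x)\<bar> \<le> e * (x + h - x)"
    using True assms(2,3)
    by (intro limit_function_increment_estimate[OF lf, of _ _ "\<delta> / 2"] near) (auto simp: abs_less_iff)
  then show ?thesis using True by simp
next
  case False
  have "\<bar>F x - F (x + h) - derivative_limit n f0 x * (x - (x + h))\<bar> \<le> e * (x - (x + h))"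
    using False assms(2,3)
    by (intro limit_function_increment_estimate[OF lf, of _ _ "\<delta> / 2"] near) (auto simp: abs_less_iff)
  then show ?thesis using False by (simp add: abs_minus_commute algebra_simps)
qed

lemma limit_function_has_derivative:
  assumes lf: "is_limit_function n f0 F"
  shows "(F has_real_derivative derivative_limit n f0 x) (at x)"
  unfolding DERIV_def LIM_eq
proof (intro allI impI)
  fix r :: real assume "r > 0"
  let ?G = "derivative_limit n f0"
  obtain \<delta> where "\<delta> > 0" and \<delta>: "\<And>t. dist t x < \<delta> \<Longrightarrow> dist (?G t) (?G x) < r / 2"
    using continuous_derivative_limit \<open>r > 0\<close> unfolding continuous_on_iff
    by (metis UNIV_I half_gt_zero)
  have near: "\<bar>?G t - ?G x\<bar> \<le> r / 2" if "\<bar>t - x\<bar> < \<delta>" for t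
    using \<delta>[of t] that by (simp add: dist_real_def)
  show "\<exists>s>0. \<forall>h. h \<noteq> 0 \<and> norm (h - 0) < s \<longrightarrow> norm ((F (x + h) - F x) / h - ?G x) < r"
  proof (intro exI conjI allI impI)
    show "\<delta> / 2 > 0" using \<open>\<delta> > 0\<close> by simp
    fix h :: real assume h: "h \<noteq> 0 \<and> norm (h - 0) < \<delta> / 2"
    have "\<bar>(F (x + h) - F x) / h - ?G x\<bar> = \<bar>F (x + h) - F x - ?G x * h\<bar> / \<bar>h\<bar>"
      using h by (simp add: field_simps abs_divide flip: abs_mult)
    also have "\<dots> \<le> r / 2"
      using limit_function_linear_approx[OF lf \<open>\<delta> > 0\<close> _ near] h by (simp add: divide_le_eq)
    finally show "norm ((F (x + h) - F x) / h - ?G x) < r"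
      using \<open>r > 0\<close> by simp
  qed
qed

lemma limit_function_C1:
  assumes "is_limit_function n f0 F"
  shows "F C1_differentiable_on UNIV"
  unfolding C1_differentiable_on_def has_real_derivative_iff_has_vector_derivative[symmetric]
  using limit_function_has_derivative[OF assms] continuous_derivative_limit by blast

end

theorem theorem2:
  fixes n :: nat and f0 :: "int \<Rightarrow> real" and F :: "real \<Rightarrow> real"
  assumes "n \<ge> 2"
    and "bounded (range f0)"
    and "is_limit_function n f0 F"
  shows "F C1_differentiable_on UNIV"
proof -
  obtain B where "\<And>i. \<bar>f0 i\<bar> \<le> B"
    using assms(2) unfolding bounded_iff by auto
  then show ?thesis
    using limit_function_C1[OF assms(1)] assms(3) by blast
qed

end
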